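(* Let $\mathcal{M}=(M,\mathcal{A}_M)$ be a $\mathbb{Z}_2^n$-supermanifold, $m\in M$, and let $(x,\xi)=(x^1,\dots,x^p,\xi^1,\dots,\xi^q)$ be a $\mathbb{Z}_2^n$-chart centered at $m$ (so $m$ corresponds to $x=0$), over a convex open set, identifying $\mathcal{A}_m$ with the stalk at $0$ of the local model. Then for every $k\ge0$, $$\mathfrak{m}_m^{k+1}=\Big\{[f]_0:\ f(x,\xi)=\sum_{0\le|\mu|\le k}g_\mu(x)\xi^\mu+\sum_{|\mu|>k}f_\mu(x)\xi^\mu\Big\},$$ where each $g_\mu$ ($|\mu|\le k$) is a smooth function vanishing to order $k-|\mu|+1$ at $x=0$ (i.e. $g_\mu(x)=O(|x|^{k-|\mu|+1})$; all its partial derivatives of order $\le k-|\mu|$ vanish at $0$) and the $f_\mu$ ($|\mu|>k$) are arbitrary smooth functions. In particular these sets form the basis of neighbourhoods of $0$ in the $\mathfrak{m}_m$-adic topology of $\mathcal{A}_m$.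
   Context: $\langle a,b\rangle=\sum_ia_ib_i\pmod2$ on $\mathbb{Z}_2^n$. A $\mathbb{Z}_2^n$-supermanifold of dimension $p|\mathbf q$ is a pair $(M,\mathcal{A}_M)$ of a Hausdorff second countable space and a sheaf of $\mathbb{Z}_2^n$-graded associative unital $\mathbb{R}$-algebras with $ab=(-1)^{\langle\deg a,\deg b\rangle}ba$, whose stalks have a unique maximal homogeneous ideal, locally isomorphic to $(\mathbb{R}^p,C^\infty_{\mathbb{R}^p}[[\xi^1,\dots,\xi^q]])$, whose sections are formal power series $\sum_\mu f_\mu(x)\xi^\mu$ with smooth coefficients in $\mathbb{Z}_2^n$-commuting formal variables $\xi^a$ of nonzero degrees ($q_k$ of the $k$-th nonzero degree); $\xi^\mu=(\xi^1)^{\mu_1}\cdots(\xi^q)^{\mu_q}$, $|\mu|=\sum\mu_a$. $\mathfrak{m}_m$ is the unique maximal homogeneous ideal of the stalk $\mathcal{A}_m$ (the germs whose independent term vanishes at $m$). *)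

theory Defs
  imports "HOL-Analysis.Analysis" "HOL-Library.Landau_Symbols"
begin

fun Ck_on :: "nat \<Rightarrow> 'a::euclidean_space set \<Rightarrow> ('a \<Rightarrow> real) \<Rightarrow> bool" where
  "Ck_on 0 U f = continuous_on U f"
| "Ck_on (Suc k) U f =
     (f differentiable_on U \<and>
      (\<forall>v\<in>Basis. Ck_on k U (\<lambda>x. frechet_derivative f (at x) v)))"

definition smooth_on :: "'a::euclidean_space set \<Rightarrow> ('a \<Rightarrow> real) \<Rightarrow> bool" where
  "smooth_on U f \<longleftrightarrow> (\<forall>k. Ck_on k U f)"

text \<open>Elements of Z_2^n are encoded as functions nat \<Rightarrow> bool (only the entries i < n matter);
  the pairing is  <a,b> = sum_i a_i b_i  (mod 2).  The formal variables are \<xi>^a, a < q, with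
  degrees dg a.  A multi-index is mu :: nat \<Rightarrow> nat (entries a \<ge> q are 0).\<close>

definition pairing :: "nat \<Rightarrow> (nat \<Rightarrow> bool) \<Rightarrow> (nat \<Rightarrow> bool) \<Rightarrow> nat" where
  "pairing n a b = card {i. i < n \<and> a i \<and> b i}"

text \<open>A variable is "odd" (self-pairing 1), hence squares to zero.  Admissible multi-indices
  index the monomials \<xi>^mu that are nonzero.\<close>
definition admissible :: "nat \<Rightarrow> nat \<Rightarrow> (nat \<Rightarrow> nat \<Rightarrow> bool) \<Rightarrow> (nat \<Rightarrow> nat) \<Rightarrow> bool" where
  "admissible n q dg mu \<longleftrightarrow>
     (\<forall>a. q \<le> a \<longrightarrow> mu a = 0) \<and>
     (\<forall>a<q. odd (pairing n (dg a) (dg a)) \<longrightarrow> mu a \<le> 1)"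

definition mi_size :: "nat \<Rightarrow> (nat \<Rightarrow> nat) \<Rightarrow> nat" where
  "mi_size q mu = (\<Sum>a<q. mu a)"

text \<open>Sign in  \<xi>^mu \<xi>^nu = sgn \<xi>^(mu+nu) (reordering to normal order).\<close>
definition mono_sign :: "nat \<Rightarrow> nat \<Rightarrow> (nat \<Rightarrow> nat \<Rightarrow> bool) \<Rightarrow> (nat \<Rightarrow> nat) \<Rightarrow> (nat \<Rightarrow> nat) \<Rightarrow> real" where
  "mono_sign n q dg mu nu =
     (-1) ^ (\<Sum>a<q. \<Sum>b<a. mu a * nu b * pairing n (dg a) (dg b))"

type_synonym 'a series = "(nat \<Rightarrow> nat) \<Rightarrow> 'a \<Rightarrow> real"

definition is_section :: "nat \<Rightarrow> nat \<Rightarrow> (nat \<Rightarrow> nat \<Rightarrow> bool) \<Rightarrow> 'a::euclidean_space set \<Rightarrow> 'a series \<Rightarrow> bool" where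
  "is_section n q dg W F \<longleftrightarrow>
     (\<forall>mu. smooth_on W (F mu)) \<and> (\<forall>mu. \<not> admissible n q dg mu \<longrightarrow> F mu = (\<lambda>_. 0))"

definition s_zero :: "'a series" where
  "s_zero = (\<lambda>mu x. 0)"

definition s_one :: "'a series" where
  "s_one = (\<lambda>mu x. if mu = (\<lambda>_. 0) then 1 else 0)"

definition s_add :: "'a series \<Rightarrow> 'a series \<Rightarrow> 'a series" where
  "s_add F G = (\<lambda>mu x. F mu x + G mu x)"

definition s_mult :: "nat \<Rightarrow> nat \<Rightarrow> (nat \<Rightarrow> nat \<Rightarrow> bool) \<Rightarrow> 'a series \<Rightarrow> 'a series \<Rightarrow> 'a series" where
  "s_mult n q dg F G = (\<lambda>lam x.
     if admissible n q dg lam then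
       (\<Sum>mu\<in>{mu. \<forall>a. mu a \<le> lam a}.
          mono_sign n q dg mu (\<lambda>a. lam a - mu a) * F mu x * G (\<lambda>a. lam a - mu a) x)
     else 0)"

definition s_prod_list :: "nat \<Rightarrow> nat \<Rightarrow> (nat \<Rightarrow> nat \<Rightarrow> bool) \<Rightarrow> 'a series list \<Rightarrow> 'a series" where
  "s_prod_list n q dg l = foldr (s_mult n q dg) l s_one"

definition s_sum_list :: "'a series list \<Rightarrow> 'a series" where
  "s_sum_list l = foldr s_add l s_zero"

definition in_max_ideal :: "'a::euclidean_space series \<Rightarrow> bool" where
  "in_max_ideal F \<longleftrightarrow> F (\<lambda>_. 0) 0 = 0"

definition in_max_ideal_pow :: "nat \<Rightarrow> nat \<Rightarrow> (nat \<Rightarrow> nat \<Rightarrow> bool) \<Rightarrow> nat \<Rightarrow> 'a::euclidean_space series \<Rightarrow> bool" where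
  "in_max_ideal_pow n q dg k F \<longleftrightarrow>
     (\<exists>W L. open W \<and> 0 \<in> W \<and>
        (\<forall>l\<in>set L. length l = Suc k \<and> (\<forall>G\<in>set l. is_section n q dg W G \<and> in_max_ideal G)) \<and>
        (\<forall>mu. \<forall>x\<in>W. F mu x = s_sum_list (map (s_prod_list n q dg) L) mu x))"

end

theory Submission
  imports Defs
begin

text \<open>
  A product of k + 1 elements of the maximal ideal has as \<xi>^mu-coefficient a sum of products of
  coefficients in which every factor either vanishes at 0 or contributes a nonzero part of mu;
  hence that coefficient is O(|x|^(k + 1 - |mu|)).

  Conversely, on a ball around 0, Hadamard's lemma and induction show that a smooth function which
  is O(|x|^m) can be written as \<Sum>i x_i h_i with every h_i O(|x|^(m-1)): the Taylor expansion
  splits off a homogeneous part of degree m - 1, which vanishes because it is O(|x|^m). Applying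
  this to the constant term of F and grouping the remaining terms by their lowest-indexed formal
  variable gives F = \<Sum>i x_i G_i + \<Sum>a \<xi>^a H_a, where the G_i and H_a satisfy the
  coefficient conditions for k - 1; induction on k concludes.
\<close>

section \<open>Closure properties of C^k and smooth functions\<close>

lemma frechet_derivative_cong_open:
  assumes "open U" "x \<in> U" "\<forall>y\<in>U. f y = g y"
  shows "frechet_derivative f (at x) = frechet_derivative g (at x)"
proof -
  have "(f has_derivative D) (at x) \<longleftrightarrow> (g has_derivative D) (at x)" for D
    using assms has_derivative_transform_within_open[of f D x UNIV U g]
      has_derivative_transform_within_open[of g D x UNIV U f] by auto
  then show ?thesis unfolding frechet_derivative_def by simp
qed

lemma differentiable_on_cong_open:
  assumes "open U" "\<forall>x\<in>U. f x = g x"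
  shows "f differentiable_on U \<longleftrightarrow> g differentiable_on U"
proof -
  have "(f has_derivative D) (at x) \<longleftrightarrow> (g has_derivative D) (at x)" if "x \<in> U" for D x
    using assms that has_derivative_transform_within_open[of f D x UNIV U g]
      has_derivative_transform_within_open[of g D x UNIV U f] by auto
  then show ?thesis unfolding differentiable_on_def differentiable_def
    using at_within_open[OF _ assms(1)] by metis
qed

lemma Ck_on_cong_open:
  assumes "open U" "\<forall>x\<in>U. f x = g x"
  shows "Ck_on k U f = Ck_on k U g"
  using assms(2)
proof (induction k arbitrary: f g)
  case 0
  then show ?case using continuous_on_cong by force
next
  case (Suc k)
  have "Ck_on k U (\<lambda>x. frechet_derivative f (at x) v) = Ck_on k U (\<lambda>x. frechet_derivative g (at x) v)" for v
    using Suc.IH frechet_derivative_cong_open[OF assms(1) _ Suc.prems] by auto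
  then show ?case using differentiable_on_cong_open[OF assms(1) Suc.prems] by simp
qed

lemma Ck_on_SucD: "Ck_on (Suc k) U f \<Longrightarrow> Ck_on k U f"
  by (induction k arbitrary: f) (auto simp: differentiable_imp_continuous_on)

lemma Ck_on_continuous_on: "Ck_on k U f \<Longrightarrow> continuous_on U f"
  by (cases k) (auto simp: differentiable_imp_continuous_on)

lemma has_derivative_frechet_derivative_on:
  assumes "open U" "f differentiable_on U" "x \<in> U"
  shows "(f has_derivative frechet_derivative f (at x)) (at x)"
  using assms unfolding differentiable_on_def
  by (metis at_within_open frechet_derivative_works)

lemma Ck_on_const: "Ck_on k U (\<lambda>x. c)"
proof (induction k arbitrary: c)
  case (Suc k)
  have "frechet_derivative (\<lambda>x. c) (at x) = (\<lambda>h. 0)" for x :: 'a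
    by (metis frechet_derivative_at has_derivative_const)
  then show ?case using Suc by simp
qed simp

lemma Ck_on_add:
  assumes "open U" "Ck_on k U f" "Ck_on k U g"
  shows "Ck_on k U (\<lambda>x. f x + g x)"
  using assms(2,3)
proof (induction k arbitrary: f g)
  case 0
  then show ?case by (simp add: continuous_on_add)
next
  case (Suc k)
  have df: "f differentiable_on U" and dg: "g differentiable_on U" using Suc.prems by auto
  have deriv: "frechet_derivative (\<lambda>x. f x + g x) (at x) v
        = frechet_derivative f (at x) v + frechet_derivative g (at x) v" if "x \<in> U" for x v
    using frechet_derivative_at[OF has_derivative_add[OF
          has_derivative_frechet_derivative_on[OF assms(1) df that]
          has_derivative_frechet_derivative_on[OF assms(1) dg that]]] by metis
  have "Ck_on k U (\<lambda>x. frechet_derivative (\<lambda>x. f x + g x) (at x) v)" if "v \<in> Basis" for v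
  proof -
    have "Ck_on k U (\<lambda>x. frechet_derivative f (at x) v + frechet_derivative g (at x) v)"
      using Suc.IH Suc.prems that by simp
    moreover have "Ck_on k U (\<lambda>x. frechet_derivative (\<lambda>x. f x + g x) (at x) v) =
       Ck_on k U (\<lambda>x. frechet_derivative f (at x) v + frechet_derivative g (at x) v)"
      by (rule Ck_on_cong_open[OF assms(1)]) (use deriv in auto)
    ultimately show ?thesis by simp
  qed
  then show ?case using df dg by (simp add: differentiable_on_add)
qed

lemma Ck_on_sum:
  assumes "open U" "finite A" "\<And>i. i \<in> A \<Longrightarrow> Ck_on k U (f i)"
  shows "Ck_on k U (\<lambda>x. \<Sum>i\<in>A. f i x)"
  using assms(2,3)
  by (induction A rule: finite_induct) (simp_all add: Ck_on_const Ck_on_add[OF assms(1)])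

lemma Ck_on_mult:
  assumes "open U" "Ck_on k U f" "Ck_on k U g"
  shows "Ck_on k U (\<lambda>x. f x * g x)"
  using assms(2,3)
proof (induction k arbitrary: f g)
  case 0
  then show ?case by (simp add: continuous_on_mult)
next
  case (Suc k)
  have df: "f differentiable_on U" and dg: "g differentiable_on U" using Suc.prems by auto
  have deriv: "frechet_derivative (\<lambda>x. f x * g x) (at x) v
        = f x * frechet_derivative g (at x) v + frechet_derivative f (at x) v * g x" if "x \<in> U" for x v
    using frechet_derivative_at[OF has_derivative_mult[OF
          has_derivative_frechet_derivative_on[OF assms(1) df that]
          has_derivative_frechet_derivative_on[OF assms(1) dg that]]] by metis
  have "Ck_on k U (\<lambda>x. frechet_derivative (\<lambda>x. f x * g x) (at x) v)" if "v \<in> Basis" for v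
  proof -
    have fk: "Ck_on k U f" and gk: "Ck_on k U g"
      using Ck_on_SucD Suc.prems by blast+
    have "Ck_on k U (\<lambda>x. f x * frechet_derivative g (at x) v)"
      using Suc.IH[OF fk] Suc.prems(2) that by simp
    moreover have "Ck_on k U (\<lambda>x. frechet_derivative f (at x) v * g x)"
      using Suc.IH[OF _ gk] Suc.prems(1) that by simp
    ultimately have "Ck_on k U (\<lambda>x. f x * frechet_derivative g (at x) v + frechet_derivative f (at x) v * g x)"
      by (rule Ck_on_add[OF assms(1)])
    moreover have "Ck_on k U (\<lambda>x. frechet_derivative (\<lambda>x. f x * g x) (at x) v) =
       Ck_on k U (\<lambda>x. f x * frechet_derivative g (at x) v + frechet_derivative f (at x) v * g x)"
      by (rule Ck_on_cong_open[OF assms(1)]) (use deriv in auto)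
    ultimately show ?thesis by simp
  qed
  then show ?case using df dg by (simp add: differentiable_on_mult)
qed

lemma Ck_on_inner_left: "Ck_on k U (\<lambda>x. x \<bullet> i)"
proof (cases k)
  case (Suc m)
  have "frechet_derivative (\<lambda>x. x \<bullet> i) (at x) = (\<lambda>h. h \<bullet> i)" for x
    by (metis frechet_derivative_at bounded_linear_inner_left bounded_linear_imp_has_derivative)
  then show ?thesis
    using Suc by (simp add: Ck_on_const differentiable_on_def bounded_linear_inner_left
        bounded_linear_imp_differentiable)
qed (simp add: continuous_on_inner continuous_on_id)

lemma Ck_on_subset:
  assumes "V \<subseteq> U" "Ck_on k U f"
  shows "Ck_on k V f"
  using assms(2)
  by (induction k arbitrary: f)
    (auto intro: continuous_on_subset[OF _ assms(1)] differentiable_on_subset[OF _ assms(1)])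

lemma smooth_on_subset: "V \<subseteq> U \<Longrightarrow> smooth_on U f \<Longrightarrow> smooth_on V f"
  unfolding smooth_on_def using Ck_on_subset by blast

lemma smooth_on_cong_open: "open U \<Longrightarrow> \<forall>x\<in>U. f x = g x \<Longrightarrow> smooth_on U f = smooth_on U g"
  unfolding smooth_on_def using Ck_on_cong_open by blast

lemma smooth_on_const: "smooth_on U (\<lambda>x. c)"
  unfolding smooth_on_def by (simp add: Ck_on_const)

lemma smooth_on_inner_left: "smooth_on U (\<lambda>x. x \<bullet> i)"
  unfolding smooth_on_def by (simp add: Ck_on_inner_left)

lemma smooth_on_mult:
  "open U \<Longrightarrow> smooth_on U f \<Longrightarrow> smooth_on U g \<Longrightarrow> smooth_on U (\<lambda>x. f x * g x)"
  unfolding smooth_on_def by (simp add: Ck_on_mult)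

lemma smooth_on_sum:
  "open U \<Longrightarrow> finite A \<Longrightarrow> (\<And>i. i \<in> A \<Longrightarrow> smooth_on U (f i)) \<Longrightarrow> smooth_on U (\<lambda>x. \<Sum>i\<in>A. f i x)"
  unfolding smooth_on_def by (simp add: Ck_on_sum)

lemma smooth_on_continuous_on: "smooth_on U f \<Longrightarrow> continuous_on U f"
  unfolding smooth_on_def by (metis Ck_on.simps(1))

lemma smooth_on_differentiable_on: "smooth_on U f \<Longrightarrow> f differentiable_on U"
  unfolding smooth_on_def by (metis Ck_on.simps(2))

lemma smooth_on_partial_derivative:
  "smooth_on U f \<Longrightarrow> v \<in> Basis \<Longrightarrow> smooth_on U (\<lambda>x. frechet_derivative f (at x) v)"
  unfolding smooth_on_def by (metis Ck_on.simps(2))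

section \<open>Hadamard's lemma\<close>

text \<open>The derivative assembled from the partial derivatives: continuity of the partials gives
  continuity in operator norm, which is what differentiation under the integral sign needs.\<close>
definition partials_blinfun :: "('a::euclidean_space \<Rightarrow> real) \<Rightarrow> 'a \<Rightarrow> 'a \<Rightarrow>\<^sub>L real" where
  "partials_blinfun \<phi> y = (\<Sum>v\<in>Basis. frechet_derivative \<phi> (at y) v *\<^sub>R blinfun_inner_left v)"

lemma partials_blinfun_apply:
  assumes "\<phi> differentiable (at y)"
  shows "blinfun_apply (partials_blinfun \<phi> y) h = frechet_derivative \<phi> (at y) h"
proof -
  have lin: "linear (frechet_derivative \<phi> (at y))"
    using assms frechet_derivative_works has_derivative_linear by blast
  have "blinfun_apply (partials_blinfun \<phi> y) h = (\<Sum>v\<in>Basis. frechet_derivative \<phi> (at y) v * (h \<bullet> v))"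
    unfolding partials_blinfun_def by (simp add: blinfun.sum_left blinfun.scaleR_left)
  also have "\<dots> = frechet_derivative \<phi> (at y) h"
    using Linear_Algebra.linear_componentwise[OF lin, of h 1] by (simp add: mult.commute)
  finally show ?thesis .
qed

lemma continuous_on_partials_blinfun:
  assumes "\<And>v. v \<in> Basis \<Longrightarrow> continuous_on S (\<lambda>y. frechet_derivative \<phi> (at y) v)"
  shows "continuous_on S (partials_blinfun \<phi>)"
  unfolding partials_blinfun_def by (intro continuous_on_sum continuous_on_scaleR continuous_on_const assms)

definition radial_integral :: "nat \<Rightarrow> ('a::euclidean_space \<Rightarrow> real) \<Rightarrow> 'a \<Rightarrow> real" where
  "radial_integral j \<phi> x = integral {0..1} (\<lambda>t. t ^ j * \<phi> (t *\<^sub>R x))"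

lemma has_derivative_radial_integrand:
  assumes "\<phi> differentiable (at (t *\<^sub>R x))"
  shows "((\<lambda>x. t ^ j * \<phi> (t *\<^sub>R x)) has_derivative
           (\<lambda>h. t ^ Suc j * frechet_derivative \<phi> (at (t *\<^sub>R x)) h)) (at x)"
proof -
  have d\<phi>: "(\<phi> has_derivative frechet_derivative \<phi> (at (t *\<^sub>R x))) (at (t *\<^sub>R x))"
    using assms frechet_derivative_works by blast
  have "((\<lambda>x. t *\<^sub>R x) has_derivative (\<lambda>h. t *\<^sub>R h)) (at x)"
    by (intro has_derivative_scaleR_right has_derivative_ident)
  from has_derivative_mult_right[OF has_derivative_compose[OF this d\<phi>]]
  have "((\<lambda>x. t ^ j * \<phi> (t *\<^sub>R x)) has_derivative
          (\<lambda>h. t ^ j * frechet_derivative \<phi> (at (t *\<^sub>R x)) (t *\<^sub>R h))) (at x)" .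
  then show ?thesis
    using linear_scale[OF has_derivative_linear[OF d\<phi>]] by (simp add: ac_simps)
qed

locale convex_open_nbhd_0 =
  fixes U :: "'a::euclidean_space set"
  assumes open_U: "open U" and convex_U: "convex U" and zero_in_U: "0 \<in> U"
begin

lemma scaleR_in_U: "x \<in> U \<Longrightarrow> t \<in> {0..1} \<Longrightarrow> t *\<^sub>R x \<in> U"
  using convexD[OF convex_U zero_in_U, of x "1 - t" t] by auto

lemma continuous_on_radial_integrand:
  assumes "continuous_on U \<phi>"
  shows "continuous_on (U \<times> {0..1}) (\<lambda>(x, t). t ^ j * \<phi> (t *\<^sub>R x))"
proof -
  have "continuous_on (U \<times> {0..1}) (\<lambda>p. \<phi> (snd p *\<^sub>R fst p))"
    by (rule continuous_on_compose2[OF assms]) (auto intro!: continuous_intros simp: scaleR_in_U)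
  then show ?thesis unfolding case_prod_beta by (intro continuous_intros) auto
qed

lemma continuous_on_radial_integral:
  "continuous_on U \<phi> \<Longrightarrow> continuous_on U (radial_integral j \<phi>)"
  unfolding radial_integral_def[abs_def]
  using integral_continuous_on_param[of U 0 1 "\<lambda>x t. t ^ j * \<phi> (t *\<^sub>R x)"]
    continuous_on_radial_integrand by (simp add: cbox_interval)

lemma radial_integrand_integrable:
  assumes "continuous_on U \<phi>" "x \<in> U"
  shows "(\<lambda>t. t ^ j * \<phi> (t *\<^sub>R x)) integrable_on {0..1}"
proof -
  have "continuous_on {0..1} (\<lambda>t. t ^ j * \<phi> (t *\<^sub>R x))"
    by (rule continuous_on_compose2[OF continuous_on_radial_integrand[OF assms(1)],
          where f="\<lambda>t. (x, t)", simplified])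
      (auto intro!: continuous_intros simp: assms(2))
  then show ?thesis by (rule integrable_continuous_real)
qed

lemma has_derivative_radial_integral:
  assumes d\<phi>: "\<phi> differentiable_on U"
    and partials: "\<And>v. v \<in> Basis \<Longrightarrow> continuous_on U (\<lambda>y. frechet_derivative \<phi> (at y) v)"
    and x0: "x0 \<in> U"
  shows "(radial_integral j \<phi> has_derivative
           (\<lambda>v. radial_integral (Suc j) (\<lambda>y. frechet_derivative \<phi> (at y) v) x0)) (at x0)"
proof -
  have d\<phi>_at: "\<phi> differentiable (at (t *\<^sub>R x))" if "x \<in> U" "t \<in> {0..1}" for x t
    using d\<phi> scaleR_in_U[OF that] open_U by (simp add: differentiable_on_eq_differentiable_at)
  define D where "D x t = (t ^ Suc j) *\<^sub>R partials_blinfun \<phi> (t *\<^sub>R x)" for x t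
  have D_apply: "blinfun_apply (D x t) = (\<lambda>h. t ^ Suc j * frechet_derivative \<phi> (at (t *\<^sub>R x)) h)"
    if "x \<in> U" "t \<in> {0..1}" for x t
    using partials_blinfun_apply[OF d\<phi>_at[OF that]] by (auto simp: D_def blinfun.scaleR_left)
  have integrand: "((\<lambda>x. t ^ j * \<phi> (t *\<^sub>R x)) has_derivative blinfun_apply (D x t)) (at x within U)"
    if "x \<in> U" "t \<in> cbox 0 1" for x t
    using has_derivative_radial_integrand[OF d\<phi>_at] D_apply that
    by (simp add: cbox_interval has_derivative_at_withinI)
  have integrable: "(\<lambda>t. t ^ j * \<phi> (t *\<^sub>R x)) integrable_on cbox 0 1" if "x \<in> U" for x
    using radial_integrand_integrable[OF differentiable_imp_continuous_on[OF d\<phi>] that]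
    by (simp add: cbox_interval)
  have D_cont: "continuous_on (U \<times> cbox 0 1) (\<lambda>(x, t). D x t)"
  proof -
    have "continuous_on (U \<times> {0..1}) (\<lambda>p. partials_blinfun \<phi> (snd p *\<^sub>R fst p))"
      by (rule continuous_on_compose2[OF continuous_on_partials_blinfun[OF partials]])
        (auto intro!: continuous_intros simp: scaleR_in_U)
    then show ?thesis unfolding D_def case_prod_beta cbox_interval by (intro continuous_intros) auto
  qed
  have "(radial_integral j \<phi> has_derivative blinfun_apply (integral (cbox 0 1) (D x0))) (at x0)"
    using leibniz_rule[OF integrand integrable D_cont x0 convex_U] at_within_open[OF x0 open_U]
    by (simp add: radial_integral_def[abs_def] cbox_interval)
  moreover have "blinfun_apply (integral (cbox 0 1) (D x0)) =
      (\<lambda>v. radial_integral (Suc j) (\<lambda>y. frechet_derivative \<phi> (at y) v) x0)"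
  proof (rule ext)
    fix v
    have "continuous_on (cbox 0 1) (D x0)"
      by (rule continuous_on_compose2[OF D_cont, where f="\<lambda>t. (x0, t)", simplified])
        (auto intro!: continuous_intros simp: x0)
    then have "blinfun_apply (integral (cbox 0 1) (D x0)) v = integral (cbox 0 1) (\<lambda>t. D x0 t v)"
      by (intro blinfun_apply_integral integrable_continuous)
    also have "\<dots> = radial_integral (Suc j) (\<lambda>y. frechet_derivative \<phi> (at y) v) x0"
      unfolding radial_integral_def cbox_interval by (rule integral_cong) (simp add: D_apply x0)
    finally show "blinfun_apply (integral (cbox 0 1) (D x0)) v =
        radial_integral (Suc j) (\<lambda>y. frechet_derivative \<phi> (at y) v) x0" .
  qed
  ultimately show ?thesis by simp
qed

lemma radial_integral_Ck: "Ck_on k U \<phi> \<Longrightarrow> Ck_on k U (radial_integral j \<phi>)"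
proof (induction k arbitrary: j \<phi>)
  case 0
  then show ?case by (simp add: continuous_on_radial_integral)
next
  case (Suc k)
  have d\<phi>: "\<phi> differentiable_on U"
    and partials: "\<And>v. v \<in> Basis \<Longrightarrow> Ck_on k U (\<lambda>x. frechet_derivative \<phi> (at x) v)"
    using Suc.prems by auto
  note deriv = has_derivative_radial_integral[OF d\<phi> Ck_on_continuous_on[OF partials]]
  have "Ck_on k U (\<lambda>x. frechet_derivative (radial_integral j \<phi>) (at x) v)" if "v \<in> Basis" for v
  proof -
    have "Ck_on k U (radial_integral (Suc j) (\<lambda>y. frechet_derivative \<phi> (at y) v))"
      using Suc.IH partials[OF that] by blast
    moreover have "Ck_on k U (\<lambda>x. frechet_derivative (radial_integral j \<phi>) (at x) v) =
        Ck_on k U (radial_integral (Suc j) (\<lambda>y. frechet_derivative \<phi> (at y) v))"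
      by (rule Ck_on_cong_open[OF open_U]) (metis frechet_derivative_at deriv)
    ultimately show ?thesis by simp
  qed
  moreover have "radial_integral j \<phi> differentiable_on U"
    using deriv unfolding differentiable_on_def differentiable_def
    by (meson has_derivative_at_withinI)
  ultimately show ?case by simp
qed

lemma radial_integral_smooth: "smooth_on U \<phi> \<Longrightarrow> smooth_on U (radial_integral j \<phi>)"
  unfolding smooth_on_def using radial_integral_Ck by blast

lemma hadamard:
  assumes h: "smooth_on U h" and x: "x \<in> U"
  shows "h x - h 0 = (\<Sum>i\<in>Basis. (x \<bullet> i) * radial_integral 0 (\<lambda>y. frechet_derivative h (at y) i) x)"
proof -
  have dh: "(h has_derivative frechet_derivative h (at (t *\<^sub>R x))) (at (t *\<^sub>R x))"
    if "t \<in> {0..1}" for t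
    using smooth_on_differentiable_on[OF h] scaleR_in_U[OF x that] open_U
    by (simp add: differentiable_on_eq_differentiable_at frechet_derivative_works)
  note lin = has_derivative_linear[OF dh]
  have "((\<lambda>t. h (t *\<^sub>R x)) has_vector_derivative frechet_derivative h (at (t *\<^sub>R x)) x)
      (at t within {0..1})" if "t \<in> {0..1}" for t
  proof -
    have "((\<lambda>t. t *\<^sub>R x) has_derivative (\<lambda>s. s *\<^sub>R x)) (at t)"
      by (rule bounded_linear_imp_has_derivative[OF bounded_linear_scaleR_left])
    from has_derivative_compose[OF this dh[OF that]]
    have "((\<lambda>t. h (t *\<^sub>R x)) has_derivative (\<lambda>s. s *\<^sub>R frechet_derivative h (at (t *\<^sub>R x)) x)) (at t)"
      by (simp only: linear_scale[OF lin[OF that]])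
    then show ?thesis by (simp add: has_vector_derivative_def has_derivative_at_withinI)
  qed
  then have "((\<lambda>t. frechet_derivative h (at (t *\<^sub>R x)) x) has_integral (h (1 *\<^sub>R x) - h (0 *\<^sub>R x))) {0..1}"
    by (intro fundamental_theorem_of_calculus) auto
  then have "h x - h 0 = integral {0..1} (\<lambda>t. frechet_derivative h (at (t *\<^sub>R x)) x)"
    by (simp add: integral_unique)
  also have "\<dots> = integral {0..1} (\<lambda>t. \<Sum>i\<in>Basis. (x \<bullet> i) * frechet_derivative h (at (t *\<^sub>R x)) i)"
  proof (rule integral_cong)
    fix t :: real assume "t \<in> {0..1}"
    from Linear_Algebra.linear_componentwise[OF lin[OF this], of x 1]
    show "frechet_derivative h (at (t *\<^sub>R x)) x =
        (\<Sum>i\<in>Basis. (x \<bullet> i) * frechet_derivative h (at (t *\<^sub>R x)) i)" by simp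
  qed
  also have "\<dots> = (\<Sum>i\<in>Basis. integral {0..1} (\<lambda>t. (x \<bullet> i) * frechet_derivative h (at (t *\<^sub>R x)) i))"
  proof (rule integral_sum)
    fix i :: 'a assume i: "i \<in> Basis"
    have "continuous_on {0..1} (\<lambda>t. frechet_derivative h (at (t *\<^sub>R x)) i)"
      by (rule continuous_on_compose2[OF smooth_on_continuous_on[OF smooth_on_partial_derivative[OF h i]]])
        (auto intro!: continuous_intros simp: scaleR_in_U[OF x])
    then show "(\<lambda>t. (x \<bullet> i) * frechet_derivative h (at (t *\<^sub>R x)) i) integrable_on {0..1}"
      by (intro integrable_continuous_real continuous_intros)
  qed simp
  also have "\<dots> = (\<Sum>i\<in>Basis. (x \<bullet> i) * radial_integral 0 (\<lambda>y. frechet_derivative h (at y) i) x)"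
    by (simp add: radial_integral_def)
  finally show ?thesis .
qed

end

section \<open>Smooth functions of order m at the origin\<close>

lemma inner_Basis_bigo_norm: "i \<in> Basis \<Longrightarrow> (\<lambda>x::'a::euclidean_space. x \<bullet> i) \<in> O[F](\<lambda>x. norm x)"
  by (rule bigoI[of _ 1]) (simp add: Basis_le_norm)

lemma norm_power_bigo_norm_power:
  assumes "e2 \<le> e1"
  shows "(\<lambda>x::'a::real_normed_vector. norm x ^ e1) \<in> O[at 0](\<lambda>x. norm x ^ e2)"
proof (rule bigoI[of _ 1])
  have "eventually (\<lambda>x::'a. norm x < 1) (at 0)"
    using eventually_at_in_open'[of "ball 0 1" 0] by (auto simp: dist_norm elim: eventually_mono)
  then show "eventually (\<lambda>x::'a. norm (norm x ^ e1) \<le> 1 * norm (norm x ^ e2)) (at 0)"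
    by eventually_elim (simp add: power_decreasing[OF assms])
qed

lemma continuous_on_bigo_1:
  assumes "continuous_on U f" "open U" "(0::'a::real_normed_vector) \<in> U"
  shows "f \<in> O[at 0](\<lambda>x. 1)"
proof (rule bigoI_tendsto[where c = "f 0"])
  show "((\<lambda>x. f x / 1) \<longlongrightarrow> f 0) (at 0)"
    using assms continuous_on_eq_continuous_at continuous_at by fastforce
qed simp

lemma homogeneous_abs_le_along_ray:
  fixes P :: "'a::real_normed_vector \<Rightarrow> real"
  assumes hom: "\<forall>t x. P (t *\<^sub>R x) = t ^ m * P x" and t: "0 < t"
    and bound: "\<bar>P (t *\<^sub>R y)\<bar> \<le> c * norm (t *\<^sub>R y) ^ Suc m"
  shows "\<bar>P y\<bar> \<le> c * norm y ^ Suc m * t"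
proof -
  have "t ^ m * \<bar>P y\<bar> = \<bar>P (t *\<^sub>R y)\<bar>" using hom t by (simp add: abs_mult)
  also have "\<dots> \<le> c * (t * norm y) ^ Suc m" using bound t by (simp add: abs_of_pos)
  also have "\<dots> = t ^ m * (c * norm y ^ Suc m * t)" by (simp add: power_mult_distrib algebra_simps)
  finally show ?thesis using t by (simp add: mult_le_cancel_left_pos)
qed

lemma homogeneous_bigo_imp_zero:
  fixes P :: "'a::euclidean_space \<Rightarrow> real"
  assumes hom: "\<forall>t x. P (t *\<^sub>R x) = t ^ m * P x"
    and big: "P \<in> O[at 0](\<lambda>x. norm x ^ Suc m)"
  shows "P y = 0"
proof -
  obtain c where "eventually (\<lambda>x. norm (P x) \<le> c * norm (norm x ^ Suc m)) (at 0)"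
    using big by (elim landau_o.bigE)
  then obtain d where d: "d > 0"
    and c: "\<forall>x. x \<noteq> 0 \<and> dist x 0 < d \<longrightarrow> norm (P x) \<le> c * norm (norm x ^ Suc m)"
    unfolding eventually_at by auto
  have nonzero: "P y = 0" if y: "y \<noteq> 0" for y
  proof -
    have bound: "eventually (\<lambda>t. \<bar>P y\<bar> \<le> c * norm y ^ Suc m * t) (at_right 0)"
      unfolding eventually_at_right_field
    proof (intro exI[of _ "d / norm y"] conjI allI impI)
      show "0 < d / norm y" using d y by simp
      fix t :: real assume t: "0 < t" "t < d / norm y"
      then have "t * norm y < d" using y by (simp add: field_simps)
      then have "\<bar>P (t *\<^sub>R y)\<bar> \<le> c * norm (t *\<^sub>R y) ^ Suc m"
        using c[rule_format, of "t *\<^sub>R y"] t y by simp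
      then show "\<bar>P y\<bar> \<le> c * norm y ^ Suc m * t"
        by (rule homogeneous_abs_le_along_ray[OF hom t(1)])
    qed
    have "((\<lambda>t. c * norm y ^ Suc m * t) \<longlongrightarrow> c * norm y ^ Suc m * 0) (at_right 0)"
      by (intro tendsto_intros)
    then have "((\<lambda>t. c * norm y ^ Suc m * t) \<longlongrightarrow> 0) (at_right 0)"
      by simp
    from tendsto_le[OF trivial_limit_at_right_real this tendsto_const bound]
    show ?thesis by simp
  qed
  moreover have "P 0 = 0"
  proof -
    obtain b :: 'a where "b \<in> Basis" using nonempty_Basis by blast
    then have "P b = 0" by (intro nonzero nonzero_Basis)
    then show ?thesis using hom by (metis mult_zero_right scaleR_zero_left)
  qed
  ultimately show ?thesis by (cases "y = 0") simp_all
qed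

fun in_coord_ideal_pow :: "'a::euclidean_space set \<Rightarrow> nat \<Rightarrow> ('a \<Rightarrow> real) \<Rightarrow> bool" where
  "in_coord_ideal_pow U 0 f = smooth_on U f"
| "in_coord_ideal_pow U (Suc m) f \<longleftrightarrow>
     (\<exists>h. (\<forall>i\<in>Basis. in_coord_ideal_pow U m (h i)) \<and> (\<forall>x\<in>U. f x = (\<Sum>i\<in>Basis. (x \<bullet> i) * h i x)))"

lemma in_coord_ideal_pow_smooth:
  assumes "open U"
  shows "in_coord_ideal_pow U m f \<Longrightarrow> smooth_on U f"
proof (induction m arbitrary: f)
  case (Suc m)
  then obtain h where h: "\<forall>i\<in>Basis. in_coord_ideal_pow U m (h i)"
    and f: "\<forall>x\<in>U. f x = (\<Sum>i\<in>Basis. (x \<bullet> i) * h i x)" by auto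
  have "smooth_on U (\<lambda>x. \<Sum>i\<in>Basis. (x \<bullet> i) * h i x)"
    using h Suc.IH by (intro smooth_on_sum smooth_on_mult assms smooth_on_inner_left) auto
  then show ?case using smooth_on_cong_open[OF assms f] by simp
qed simp

lemma in_coord_ideal_pow_bigo:
  assumes "open U" "0 \<in> U"
  shows "in_coord_ideal_pow U m f \<Longrightarrow> f \<in> O[at 0](\<lambda>x. norm x ^ m)"
proof (induction m arbitrary: f)
  case 0
  then show ?case
    using continuous_on_bigo_1[OF smooth_on_continuous_on assms] by simp
next
  case (Suc m)
  then obtain h where h: "\<forall>i\<in>Basis. in_coord_ideal_pow U m (h i)"
    and f: "\<forall>x\<in>U. f x = (\<Sum>i\<in>Basis. (x \<bullet> i) * h i x)" by auto
  have "(\<lambda>x. (x \<bullet> i) * h i x) \<in> O[at 0](\<lambda>x. norm x ^ Suc m)" if "i \<in> Basis" for i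
  proof -
    have "(\<lambda>x. (x \<bullet> i) * h i x) \<in> O[at 0](\<lambda>x. norm x * norm x ^ m)"
      by (rule landau_o.big.mult[OF inner_Basis_bigo_norm[OF that] Suc.IH]) (use h that in auto)
    then show ?thesis by simp
  qed
  then have "(\<lambda>x. \<Sum>i\<in>Basis. (x \<bullet> i) * h i x) \<in> O[at 0](\<lambda>x. norm x ^ Suc m)"
    by (rule big_sum_in_bigo)
  moreover have "eventually (\<lambda>x. f x = (\<Sum>i\<in>Basis. (x \<bullet> i) * h i x)) (at 0)"
    using eventually_at_in_open'[OF assms] f by (auto elim: eventually_mono)
  ultimately show ?case by (simp add: landau_o.big.in_cong)
qed

context convex_open_nbhd_0
begin

lemma in_coord_ideal_pow_1_sub_value_0:
  assumes "smooth_on U f"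
  shows "in_coord_ideal_pow U 1 (\<lambda>x. f x - f 0)"
proof -
  let ?h = "\<lambda>i. radial_integral 0 (\<lambda>y. frechet_derivative f (at y) i)"
  have "\<forall>i\<in>Basis. in_coord_ideal_pow U 0 (?h i)"
    using radial_integral_smooth[OF smooth_on_partial_derivative[OF assms]] by simp
  moreover have "\<forall>x\<in>U. f x - f 0 = (\<Sum>i\<in>Basis. (x \<bullet> i) * ?h i x)"
    using hadamard[OF assms] by blast
  ultimately show ?thesis
    unfolding One_nat_def in_coord_ideal_pow.simps(2) by (intro exI[of _ ?h]) blast
qed

text \<open>Up to a remainder of order m + 1, a function of order m is homogeneous of degree m (its
  Taylor term of degree m).\<close>
lemma in_coord_ideal_pow_homogeneous_part:
  "in_coord_ideal_pow U m f \<Longrightarrow>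
     \<exists>P. (\<forall>t x. P (t *\<^sub>R x) = t ^ m * P x) \<and> in_coord_ideal_pow U (Suc m) (\<lambda>x. f x - P x)"
proof (induction m arbitrary: f)
  case 0
  then show ?case
    using in_coord_ideal_pow_1_sub_value_0 by (intro exI[of _ "\<lambda>x. f 0"]) simp
next
  case (Suc m)
  then obtain h where h: "\<forall>i\<in>Basis. in_coord_ideal_pow U m (h i)"
    and f: "\<forall>x\<in>U. f x = (\<Sum>i\<in>Basis. (x \<bullet> i) * h i x)" by auto
  have "\<forall>i\<in>Basis. \<exists>Q. (\<forall>t x. Q (t *\<^sub>R x) = t ^ m * Q x) \<and>
      in_coord_ideal_pow U (Suc m) (\<lambda>x. h i x - Q x)"
    using h Suc.IH by blast
  then obtain Q where Q: "\<forall>i\<in>Basis. (\<forall>t x. Q i (t *\<^sub>R x) = t ^ m * Q i x) \<and>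
      in_coord_ideal_pow U (Suc m) (\<lambda>x. h i x - Q i x)"
    by metis
  define P where "P x = (\<Sum>i\<in>Basis. (x \<bullet> i) * Q i x)" for x
  have "P (t *\<^sub>R x) = t ^ Suc m * P x" for t x
    unfolding P_def sum_distrib_left using Q by (intro sum.cong) (auto simp: algebra_simps)
  moreover have "in_coord_ideal_pow U (Suc (Suc m)) (\<lambda>x. f x - P x)"
    unfolding in_coord_ideal_pow.simps(2)[of U "Suc m"]
  proof (intro exI conjI)
    show "\<forall>i\<in>Basis. in_coord_ideal_pow U (Suc m) (\<lambda>x. h i x - Q i x)"
      using Q by blast
    show "\<forall>x\<in>U. f x - P x = (\<Sum>i\<in>Basis. (x \<bullet> i) * (h i x - Q i x))"
      using f by (simp add: P_def right_diff_distrib sum_subtractf)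
  qed
  ultimately show ?case by blast
qed

lemma smooth_bigo_imp_in_coord_ideal_pow:
  "smooth_on U f \<Longrightarrow> f \<in> O[at 0](\<lambda>x. norm x ^ m) \<Longrightarrow> in_coord_ideal_pow U m f"
proof (induction m arbitrary: f)
  case (Suc m)
  have "f \<in> O[at 0](\<lambda>x. norm x ^ m)"
    using landau_o.big_trans[OF Suc.prems(2) norm_power_bigo_norm_power[of m "Suc m"]] by simp
  then have "in_coord_ideal_pow U m f"
    using Suc.IH Suc.prems(1) by blast
  then obtain P where hom: "\<forall>t x. P (t *\<^sub>R x) = t ^ m * P x"
    and rem: "in_coord_ideal_pow U (Suc m) (\<lambda>x. f x - P x)"
    using in_coord_ideal_pow_homogeneous_part by blast
  have "(\<lambda>x. f x - (f x - P x)) \<in> O[at 0](\<lambda>x. norm x ^ Suc m)"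
    using Suc.prems(2) in_coord_ideal_pow_bigo[OF open_U zero_in_U rem] by (rule sum_in_bigo(2))
  then have "P = (\<lambda>_. 0)"
    by (intro ext homogeneous_bigo_imp_zero[OF hom]) simp
  then show ?case using rem by simp
qed simp

end

section \<open>Monomials and the product of series\<close>

lemma sum_eq_single:
  assumes "finite A" "a \<in> A" "\<And>b. b \<in> A \<Longrightarrow> b \<noteq> a \<Longrightarrow> f b = 0"
  shows "sum f A = f a"
  using assms by (simp add: sum.remove sum.neutral)

lemma finite_pointwise_le:
  assumes "\<forall>a. q \<le> a \<longrightarrow> lam a = 0"
  shows "finite {mu :: nat \<Rightarrow> nat. \<forall>a. mu a \<le> lam a}"
proof (rule finite_subset)
  show "finite {mu. \<forall>a. (a \<in> {..<q} \<longrightarrow> mu a \<in> {..\<Sum>b<q. lam b}) \<and> (a \<notin> {..<q} \<longrightarrow> mu a = 0)}"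
    by (intro finite_set_of_finite_funs) auto
  have "lam a \<le> (\<Sum>b<q. lam b)" if "a < q" for a
    using that by (intro member_le_sum) auto
  then show "{mu. \<forall>a. mu a \<le> lam a} \<subseteq>
      {mu. \<forall>a. (a \<in> {..<q} \<longrightarrow> mu a \<in> {..\<Sum>b<q. lam b}) \<and> (a \<notin> {..<q} \<longrightarrow> mu a = 0)}"
    using assms by (auto intro: order_trans) (metis le_zero_eq not_le)
qed

lemma mi_size_eq_0_iff:
  assumes "\<forall>a. q \<le> a \<longrightarrow> mu a = 0"
  shows "mi_size q mu = 0 \<longleftrightarrow> mu = (\<lambda>_. 0)"
proof -
  have "mi_size q mu = 0 \<longleftrightarrow> (\<forall>a<q. mu a = 0)" by (auto simp: mi_size_def)
  also have "\<dots> \<longleftrightarrow> mu = (\<lambda>_. 0)" using assms by (metis not_le)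
  finally show ?thesis .
qed

lemma mi_size_diff:
  assumes "\<forall>a. mu a \<le> lam a"
  shows "mi_size q (\<lambda>a. lam a - mu a) = mi_size q lam - mi_size q mu"
    and "mi_size q mu \<le> mi_size q lam"
  using assms by (simp_all add: mi_size_def sum_subtractf_nat sum_mono)

text \<open>Exactly one a contributes: the least index with lam a \<noteq> 0.\<close>
lemma sum_leading_index:
  fixes lam :: "nat \<Rightarrow> nat"
  assumes "\<forall>a. q \<le> a \<longrightarrow> lam a = 0" "lam \<noteq> (\<lambda>_. 0)"
  shows "(\<Sum>a<q. if 1 \<le> lam a \<and> (\<forall>b<a. lam b = 0) then c else 0) = c"
proof -
  define a0 where "a0 = (LEAST a. lam a \<noteq> 0)"
  have a0: "lam a0 \<noteq> 0" using assms(2) unfolding a0_def by (metis (mono_tags) LeastI)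
  have below: "\<And>b. b < a0 \<Longrightarrow> lam b = 0" unfolding a0_def using not_less_Least by blast
  have "a0 < q" using a0 assms(1) by (meson not_le)
  have "(\<Sum>a<q. if 1 \<le> lam a \<and> (\<forall>b<a. lam b = 0) then c else 0) =
      (if 1 \<le> lam a0 \<and> (\<forall>b<a0. lam b = 0) then c else 0)"
  proof (rule sum_eq_single)
    fix b assume "b \<in> {..<q}" "b \<noteq> a0"
    then consider "b < a0" | "a0 < b" by linarith
    then show "(if 1 \<le> lam b \<and> (\<forall>c<b. lam c = 0) then c else 0) = 0"
      by cases (use below a0 in auto)
  qed (use \<open>a0 < q\<close> in auto)
  then show ?thesis using a0 below by simp
qed

definition unit_mi :: "nat \<Rightarrow> nat \<Rightarrow> nat" where
  "unit_mi a = (\<lambda>b. if b = a then 1 else 0)"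

lemma mi_size_add_unit_mi: "a < q \<Longrightarrow> mi_size q (\<lambda>b. nu b + unit_mi a b) = Suc (mi_size q nu)"
  by (simp add: mi_size_def sum.distrib unit_mi_def)

definition const_series :: "('a \<Rightarrow> real) \<Rightarrow> 'a series" where
  "const_series h = (\<lambda>mu x. if mu = (\<lambda>_. 0) then h x else 0)"

definition var_series :: "nat \<Rightarrow> 'a series" where
  "var_series a = (\<lambda>mu x. if mu = unit_mi a then 1 else 0)"

lemma s_sum_list_append: "s_sum_list (L1 @ L2) lam x = s_sum_list L1 lam x + s_sum_list L2 lam x"
  by (induction L1) (simp_all add: s_sum_list_def s_add_def s_zero_def)

context
  fixes n q :: nat and dg :: "nat \<Rightarrow> nat \<Rightarrow> bool"
begin

lemma admissible_zero: "admissible n q dg (\<lambda>_. 0)"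
  by (simp add: admissible_def)

lemma admissible_unit_mi: "a < q \<Longrightarrow> admissible n q dg (unit_mi a)"
  by (simp add: admissible_def unit_mi_def)

lemma admissible_add_unit_miD:
  assumes "admissible n q dg (\<lambda>b. nu b + unit_mi a b)" "a < q"
  shows "admissible n q dg nu"
  using assms unfolding admissible_def unit_mi_def by (metis add_is_0 add_leD1)

lemma finite_le_admissible: "admissible n q dg lam \<Longrightarrow> finite {mu. \<forall>a. mu a \<le> lam a}"
  by (rule finite_pointwise_le[of q]) (simp add: admissible_def)

lemma s_mult_s_one_right:
  assumes "\<forall>mu. \<not> admissible n q dg mu \<longrightarrow> F mu = (\<lambda>_. 0)"
  shows "s_mult n q dg F s_one lam x = F lam x"
proof (cases "admissible n q dg lam")
  case True
  then have "s_mult n q dg F s_one lam x =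
      mono_sign n q dg lam (\<lambda>a. lam a - lam a) * F lam x * s_one (\<lambda>a. lam a - lam a) x"
    unfolding s_mult_def
    by (simp only: if_True, intro sum_eq_single finite_le_admissible)
      (auto simp: s_one_def fun_eq_iff intro: le_antisym)
  then show ?thesis by (simp add: mono_sign_def s_one_def)
qed (use assms in \<open>simp add: s_mult_def\<close>)

lemma s_mult_const_series:
  "s_mult n q dg (const_series h) G lam x = (if admissible n q dg lam then h x * G lam x else 0)"
proof (cases "admissible n q dg lam")
  case True
  then have "s_mult n q dg (const_series h) G lam x =
      mono_sign n q dg (\<lambda>_. 0) (\<lambda>a. lam a - 0) * const_series h (\<lambda>_. 0) x * G (\<lambda>a. lam a - 0) x"
    unfolding s_mult_def
    by (simp only: if_True, intro sum_eq_single finite_le_admissible) (auto simp: const_series_def)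
  then show ?thesis using True by (simp add: mono_sign_def const_series_def)
qed (simp add: s_mult_def)

lemma s_mult_var_series:
  "s_mult n q dg (var_series a) G lam x =
     (if admissible n q dg lam \<and> 1 \<le> lam a
      then mono_sign n q dg (unit_mi a) (\<lambda>b. lam b - unit_mi a b) * G (\<lambda>b. lam b - unit_mi a b) x
      else 0)"
proof (cases "admissible n q dg lam \<and> 1 \<le> lam a")
  case True
  then have "s_mult n q dg (var_series a) G lam x = mono_sign n q dg (unit_mi a) (\<lambda>b. lam b - unit_mi a b) *
      var_series a (unit_mi a) x * G (\<lambda>b. lam b - unit_mi a b) x"
    unfolding s_mult_def
    by (simp only: if_True, intro sum_eq_single finite_le_admissible)
      (auto simp: var_series_def unit_mi_def)
  then show ?thesis using True by (simp add: var_series_def)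
next
  case False
  have "var_series a mu x = 0" if "\<forall>b. mu b \<le> lam b" "\<not> 1 \<le> lam a" for mu
  proof -
    have "mu a \<noteq> unit_mi a a" using that(1)[rule_format, of a] that(2) by (simp add: unit_mi_def)
    then show ?thesis by (auto simp: var_series_def)
  qed
  then show ?thesis using False by (auto simp: s_mult_def intro!: sum.neutral)
qed

lemma s_mult_cong:
  "(\<And>nu. A nu x = B nu x) \<Longrightarrow> s_mult n q dg Y A lam x = s_mult n q dg Y B lam x"
  by (simp add: s_mult_def)

lemma s_mult_s_add_right: "s_mult n q dg Y (s_add A B) = s_add (s_mult n q dg Y A) (s_mult n q dg Y B)"
  by (auto simp: fun_eq_iff s_mult_def s_add_def sum.distrib[symmetric] algebra_simps)

lemma s_mult_s_zero_right: "s_mult n q dg Y s_zero = s_zero"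
  by (auto simp: fun_eq_iff s_mult_def s_zero_def)

lemma s_sum_list_map_Cons:
  "s_sum_list (map (s_prod_list n q dg) (map (Cons Y) L)) =
     s_mult n q dg Y (s_sum_list (map (s_prod_list n q dg) L))"
  by (induction L) (simp_all add: s_sum_list_def s_prod_list_def s_mult_s_zero_right s_mult_s_add_right)

section \<open>Coefficient orders of products of elements of the maximal ideal\<close>

lemma section_in_max_ideal_coeff_bigo:
  assumes W: "open W" "0 \<in> W" and G: "is_section n q dg W G" "in_max_ideal G"
  shows "G mu \<in> O[at 0](\<lambda>x. norm x ^ (if mu = (\<lambda>_. 0) then 1 else 0))"
proof -
  obtain r where r: "r > 0" "ball 0 r \<subseteq> W" using W open_contains_ball by blast
  interpret ball: convex_open_nbhd_0 "ball (0::'a) r" by unfold_locales (auto simp: r)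
  have smooth: "smooth_on (ball 0 r) (G mu)"
    using G smooth_on_subset[OF r(2)] by (auto simp: is_section_def)
  show ?thesis
  proof (cases "mu = (\<lambda>_. 0)")
    case True
    have "(\<lambda>x. G mu x - G mu 0) \<in> O[at 0](\<lambda>x. norm x ^ 1)"
      using in_coord_ideal_pow_bigo[OF ball.open_U ball.zero_in_U
          ball.in_coord_ideal_pow_1_sub_value_0[OF smooth]] .
    then show ?thesis using True G(2) by (simp add: in_max_ideal_def)
  next
    case False
    then show ?thesis
      using continuous_on_bigo_1[OF smooth_on_continuous_on[OF smooth]] r by simp
  qed
qed

text \<open>A factor from the maximal ideal either raises the order of vanishing by one or contributes
  a nonzero part mu of the multi-index, which lowers the required order by mi_size q mu \<ge> 1.\<close>
lemma max_ideal_coeff_mult_bigo: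
  assumes W: "open W" "0 \<in> W" and G: "is_section n q dg W G" "in_max_ideal G"
    and P: "P (\<lambda>a. lam a - mu a) \<in> O[at 0](\<lambda>x. norm x ^ (N - mi_size q (\<lambda>a. lam a - mu a)))"
    and lam: "admissible n q dg lam" and mu: "\<forall>a. mu a \<le> lam a"
  shows "(\<lambda>x. G mu x * P (\<lambda>a. lam a - mu a) x) \<in> O[at 0](\<lambda>x. norm x ^ (Suc N - mi_size q lam))"
proof -
  define d where "d = (if mu = (\<lambda>_. 0) then 1 else (0::nat))"
  define e where "e = N - mi_size q (\<lambda>a. lam a - mu a)"
  have "(\<lambda>x. G mu x * P (\<lambda>a. lam a - mu a) x) \<in> O[at 0](\<lambda>x. norm x ^ d * norm x ^ e)"
    unfolding d_def e_def by (rule landau_o.big.mult[OF section_in_max_ideal_coeff_bigo[OF W G] P])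
  then have "(\<lambda>x. G mu x * P (\<lambda>a. lam a - mu a) x) \<in> O[at 0](\<lambda>x. norm x ^ (d + e))"
    by (simp add: power_add)
  moreover have "Suc N - mi_size q lam \<le> d + e"
  proof -
    have "\<forall>a. q \<le> a \<longrightarrow> mu a = 0"
      using lam mu unfolding admissible_def by (metis le_zero_eq)
    then show ?thesis
      using mi_size_diff[OF mu, of q] mi_size_eq_0_iff[of q mu] unfolding d_def e_def
      by (cases "mu = (\<lambda>_. 0)") auto
  qed
  ultimately show ?thesis
    using landau_o.big_trans norm_power_bigo_norm_power by blast
qed

lemma s_prod_list_bigo:
  assumes W: "open W" "0 \<in> W"
    and l: "\<forall>G\<in>set l. is_section n q dg W G \<and> in_max_ideal G"
  shows "s_prod_list n q dg l lam \<in> O[at 0](\<lambda>x. norm x ^ (length l - mi_size q lam))"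
  using l
proof (induction l arbitrary: lam)
  case Nil
  show ?case by (cases "lam = (\<lambda>_. 0)") (simp_all add: s_prod_list_def s_one_def)
next
  case (Cons G l)
  define P where "P = s_prod_list n q dg l"
  have G: "is_section n q dg W G" "in_max_ideal G" using Cons.prems by auto
  have IH: "P nu \<in> O[at 0](\<lambda>x. norm x ^ (length l - mi_size q nu))" for nu
    unfolding P_def using Cons.IH Cons.prems by simp
  have term_bigo: "(\<lambda>x. G mu x * P (\<lambda>a. lam a - mu a) x)
      \<in> O[at 0](\<lambda>x. norm x ^ (Suc (length l) - mi_size q lam))"
    if "admissible n q dg lam" "\<forall>a. mu a \<le> lam a" for mu
    using max_ideal_coeff_mult_bigo[where P = P and lam = lam and mu = mu, OF W G IH that] .
  have "s_prod_list n q dg (G # l) lam = (\<lambda>x. if admissible n q dg lam then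
      (\<Sum>mu\<in>{mu. \<forall>a. mu a \<le> lam a}.
         mono_sign n q dg mu (\<lambda>a. lam a - mu a) * G mu x * P (\<lambda>a. lam a - mu a) x) else 0)"
    unfolding P_def s_prod_list_def by (simp add: s_mult_def)
  moreover have "(\<lambda>x. \<Sum>mu\<in>{mu. \<forall>a. mu a \<le> lam a}.
         mono_sign n q dg mu (\<lambda>a. lam a - mu a) * G mu x * P (\<lambda>a. lam a - mu a) x)
      \<in> O[at 0](\<lambda>x. norm x ^ (length (G # l) - mi_size q lam))" if lam: "admissible n q dg lam"
  proof (rule big_sum_in_bigo)
    fix mu assume "mu \<in> {mu. \<forall>a. mu a \<le> lam a}"
    then have "(\<lambda>x. mono_sign n q dg mu (\<lambda>a. lam a - mu a) * (G mu x * P (\<lambda>a. lam a - mu a) x))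
        \<in> O[at 0](\<lambda>x. norm x ^ (length (G # l) - mi_size q lam))"
      using term_bigo[OF lam] by (simp add: mono_sign_def)
    then show "(\<lambda>x. mono_sign n q dg mu (\<lambda>a. lam a - mu a) * G mu x * P (\<lambda>a. lam a - mu a) x)
        \<in> O[at 0](\<lambda>x. norm x ^ (length (G # l) - mi_size q lam))"
      by (simp only: mult.assoc)
  qed
  ultimately show ?case by (cases "admissible n q dg lam") simp_all
qed

lemma s_sum_list_bigo:
  assumes "\<forall>l\<in>set L. s_prod_list n q dg l mu \<in> O[at 0](g)"
  shows "s_sum_list (map (s_prod_list n q dg) L) mu \<in> O[at 0](g)"
  using assms
  by (induction L) (auto simp: s_sum_list_def s_add_def s_zero_def intro!: sum_in_bigo)

end

context
  fixes n q :: nat and dg :: "nat \<Rightarrow> nat \<Rightarrow> bool"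
begin

definition max_ideal_pow_on :: "'a::euclidean_space set \<Rightarrow> nat \<Rightarrow> 'a series \<Rightarrow> bool" where
  "max_ideal_pow_on W k F \<longleftrightarrow> (\<exists>L.
     (\<forall>l\<in>set L. length l = Suc k \<and> (\<forall>G\<in>set l. is_section n q dg W G \<and> in_max_ideal G)) \<and>
     (\<forall>mu. \<forall>x\<in>W. F mu x = s_sum_list (map (s_prod_list n q dg) L) mu x))"

definition vanishing_coeffs :: "nat \<Rightarrow> 'a::euclidean_space series \<Rightarrow> bool" where
  "vanishing_coeffs k F \<longleftrightarrow> (\<forall>mu. admissible n q dg mu \<longrightarrow> mi_size q mu \<le> k \<longrightarrow>
     F mu \<in> O[at 0](\<lambda>x. norm x ^ (k - mi_size q mu + 1)))"

lemma in_max_ideal_pow_iff: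
  "in_max_ideal_pow n q dg k F \<longleftrightarrow> (\<exists>W. open W \<and> 0 \<in> W \<and> max_ideal_pow_on W k F)"
  unfolding in_max_ideal_pow_def max_ideal_pow_on_def by blast

lemma max_ideal_pow_on_imp_vanishing_coeffs:
  assumes W: "open W" "0 \<in> W" and F: "max_ideal_pow_on W k F"
  shows "vanishing_coeffs k F"
  unfolding vanishing_coeffs_def
proof (intro allI impI)
  fix mu assume mu: "admissible n q dg mu" "mi_size q mu \<le> k"
  obtain L where L: "\<forall>l\<in>set L. length l = Suc k \<and> (\<forall>G\<in>set l. is_section n q dg W G \<and> in_max_ideal G)"
    and F_eq: "\<forall>mu. \<forall>x\<in>W. F mu x = s_sum_list (map (s_prod_list n q dg) L) mu x"
    using F unfolding max_ideal_pow_on_def by blast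
  have "\<forall>l\<in>set L. s_prod_list n q dg l mu \<in> O[at 0](\<lambda>x. norm x ^ (k - mi_size q mu + 1))"
  proof
    fix l assume l: "l \<in> set L"
    then have "s_prod_list n q dg l mu \<in> O[at 0](\<lambda>x. norm x ^ (length l - mi_size q mu))"
      using L by (intro s_prod_list_bigo[OF W]) auto
    then show "s_prod_list n q dg l mu \<in> O[at 0](\<lambda>x. norm x ^ (k - mi_size q mu + 1))"
      using L l mu(2) by (simp add: Suc_diff_le)
  qed
  then have "s_sum_list (map (s_prod_list n q dg) L) mu \<in> O[at 0](\<lambda>x. norm x ^ (k - mi_size q mu + 1))"
    by (rule s_sum_list_bigo)
  moreover have "eventually (\<lambda>x. F mu x = s_sum_list (map (s_prod_list n q dg) L) mu x) (at 0)"
    using eventually_at_in_open'[OF W] F_eq by (auto elim: eventually_mono)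
  ultimately show "F mu \<in> O[at 0](\<lambda>x. norm x ^ (k - mi_size q mu + 1))"
    by (simp add: landau_o.big.in_cong)
qed

section \<open>Generating the powers of the maximal ideal\<close>

lemma max_ideal_pow_on_0:
  assumes "is_section n q dg W F" "in_max_ideal F"
  shows "max_ideal_pow_on W 0 F"
  unfolding max_ideal_pow_on_def
proof (intro exI[of _ "[[F]]"] conjI)
  have "\<forall>mu. \<not> admissible n q dg mu \<longrightarrow> F mu = (\<lambda>_. 0)"
    using assms(1) by (simp add: is_section_def)
  then show "\<forall>mu. \<forall>x\<in>W. F mu x = s_sum_list (map (s_prod_list n q dg) [[F]]) mu x"
    by (simp add: s_sum_list_def s_prod_list_def s_add_def s_zero_def s_mult_s_one_right)
qed (use assms in simp)

lemma max_ideal_pow_on_mult_add: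
  assumes Y: "is_section n q dg W Y" "in_max_ideal Y" and G: "max_ideal_pow_on W k G"
    and F': "max_ideal_pow_on W (Suc k) F'"
    and F: "\<forall>mu. \<forall>x\<in>W. F mu x = s_mult n q dg Y G mu x + F' mu x"
  shows "max_ideal_pow_on W (Suc k) F"
proof -
  obtain LG where LG: "\<forall>l\<in>set LG. length l = Suc k \<and> (\<forall>G\<in>set l. is_section n q dg W G \<and> in_max_ideal G)"
    and G_eq: "\<forall>mu. \<forall>x\<in>W. G mu x = s_sum_list (map (s_prod_list n q dg) LG) mu x"
    using G unfolding max_ideal_pow_on_def by blast
  obtain L where L: "\<forall>l\<in>set L. length l = Suc (Suc k) \<and> (\<forall>G\<in>set l. is_section n q dg W G \<and> in_max_ideal G)"
    and F'_eq: "\<forall>mu. \<forall>x\<in>W. F' mu x = s_sum_list (map (s_prod_list n q dg) L) mu x"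
    using F' unfolding max_ideal_pow_on_def by blast
  show ?thesis unfolding max_ideal_pow_on_def
  proof (intro exI[of _ "map (Cons Y) LG @ L"] conjI)
    show "\<forall>l\<in>set (map (Cons Y) LG @ L). length l = Suc (Suc k) \<and>
        (\<forall>G\<in>set l. is_section n q dg W G \<and> in_max_ideal G)"
      using LG L Y by auto
    show "\<forall>mu. \<forall>x\<in>W. F mu x = s_sum_list (map (s_prod_list n q dg) (map (Cons Y) LG @ L)) mu x"
    proof (intro allI ballI)
      fix mu x assume x: "x \<in> W"
      have "s_sum_list (map (s_prod_list n q dg) (map (Cons Y) LG @ L)) mu x =
          s_mult n q dg Y (s_sum_list (map (s_prod_list n q dg) LG)) mu x +
          s_sum_list (map (s_prod_list n q dg) L) mu x"
        by (simp only: map_append s_sum_list_append s_sum_list_map_Cons)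
      also have "\<dots> = F mu x"
        using s_mult_cong[of G x "s_sum_list (map (s_prod_list n q dg) LG)"] G_eq F'_eq F x by simp
      finally show "F mu x = s_sum_list (map (s_prod_list n q dg) (map (Cons Y) LG @ L)) mu x" ..
    qed
  qed
qed

lemma max_ideal_pow_on_Suc:
  assumes "\<forall>(Y, G)\<in>set ps. is_section n q dg W Y \<and> in_max_ideal Y \<and> max_ideal_pow_on W k G"
    and "\<forall>mu. \<forall>x\<in>W. F mu x = (\<Sum>(Y, G)\<leftarrow>ps. s_mult n q dg Y G mu x)"
  shows "max_ideal_pow_on W (Suc k) F"
  using assms
proof (induction ps arbitrary: F)
  case Nil
  then show ?case unfolding max_ideal_pow_on_def
    by (intro exI[of _ "[]"]) (simp add: s_sum_list_def s_zero_def)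
next
  case (Cons p ps)
  obtain Y G where p: "p = (Y, G)" by fastforce
  show ?case
  proof (rule max_ideal_pow_on_mult_add)
    show "max_ideal_pow_on W (Suc k) (\<lambda>mu x. \<Sum>(Y, G)\<leftarrow>ps. s_mult n q dg Y G mu x)"
      by (rule Cons.IH) (use Cons.prems(1) in auto)
  qed (use Cons.prems p in auto)
qed

text \<open>The terms of F whose lowest-indexed formal variable is \<xi>^a, divided by \<xi>^a.\<close>
definition var_quotient :: "nat \<Rightarrow> 'a series \<Rightarrow> 'a series" where
  "var_quotient a F = (\<lambda>nu.
     if (\<forall>b<a. nu b = 0) \<and> admissible n q dg (\<lambda>b. nu b + unit_mi a b)
     then F (\<lambda>b. nu b + unit_mi a b) else (\<lambda>_. 0))"

lemma s_mult_var_quotient: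
  assumes "admissible n q dg lam"
  shows "s_mult n q dg (var_series a) (var_quotient a F) lam x =
    (if 1 \<le> lam a \<and> (\<forall>b<a. lam b = 0) then F lam x else 0)"
proof (cases "1 \<le> lam a")
  case True
  define nu where "nu = (\<lambda>b. lam b - unit_mi a b)"
  have lam: "(\<lambda>b. nu b + unit_mi a b) = lam" and below: "\<And>b. b < a \<Longrightarrow> nu b = lam b"
    using True by (auto simp: nu_def unit_mi_def fun_eq_iff)
  have "mono_sign n q dg (unit_mi a) nu = 1" if "\<forall>b<a. lam b = 0"
    using that below unfolding mono_sign_def
    by (subst sum.neutral) (auto intro!: sum.neutral simp: unit_mi_def)
  then show ?thesis
    using True assms lam below
    by (auto simp: s_mult_var_series var_quotient_def nu_def[symmetric])
qed (simp add: s_mult_var_series assms)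

lemma series_decomposition:
  assumes F: "\<forall>mu. \<not> admissible n q dg mu \<longrightarrow> F mu = (\<lambda>_. 0)"
    and F0: "F (\<lambda>_. 0) x = (\<Sum>i\<in>Basis. (x \<bullet> i) * h i x)"
  shows "(\<Sum>i\<in>Basis. s_mult n q dg (const_series (\<lambda>x. x \<bullet> i)) (const_series (h i)) lam x) +
         (\<Sum>a<q. s_mult n q dg (var_series a) (var_quotient a F) lam x) = F lam x"
proof (cases "admissible n q dg lam")
  case False
  then show ?thesis using F by (simp add: s_mult_const_series s_mult_var_series)
next
  case True
  then have "(\<Sum>a<q. s_mult n q dg (var_series a) (var_quotient a F) lam x) =
      (if lam = (\<lambda>_. 0) then 0 else F lam x)"
    using sum_leading_index[of q lam "F lam x"]
    by (auto simp: s_mult_var_quotient admissible_def)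
  moreover have "(\<Sum>i\<in>Basis. s_mult n q dg (const_series (\<lambda>x. x \<bullet> i)) (const_series (h i)) lam x) =
      (if lam = (\<lambda>_. 0) then F lam x else 0)"
    unfolding s_mult_const_series using True F0 by (simp add: const_series_def)
  ultimately show ?thesis by simp
qed

lemma is_section_const_series:
  assumes "smooth_on W h"
  shows "is_section n q dg W (const_series h)"
proof -
  have "smooth_on W (const_series h mu)" for mu
    using assms by (cases "mu = (\<lambda>_. 0)") (simp_all add: const_series_def smooth_on_const)
  moreover have "const_series h mu = (\<lambda>_. 0)" if "\<not> admissible n q dg mu" for mu
    using that admissible_zero[of n q dg] by (auto simp: const_series_def)
  ultimately show ?thesis by (simp add: is_section_def)
qed

lemma is_section_var_series:
  assumes "a < q"
  shows "is_section n q dg W (var_series a)"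
proof -
  have "smooth_on W (var_series a mu)" for mu
    by (cases "mu = unit_mi a") (simp_all add: var_series_def smooth_on_const)
  moreover have "var_series a mu = (\<lambda>_. 0)" if "\<not> admissible n q dg mu" for mu
    using that admissible_unit_mi[OF assms] by (auto simp: var_series_def)
  ultimately show ?thesis unfolding is_section_def by blast
qed

lemma in_max_ideal_var_series: "in_max_ideal (var_series a)"
  by (auto simp: in_max_ideal_def var_series_def unit_mi_def fun_eq_iff)

lemma is_section_var_quotient:
  assumes "a < q" "is_section n q dg W F"
  shows "is_section n q dg W (var_quotient a F)"
  using assms admissible_add_unit_miD[OF _ assms(1)]
  by (auto simp: is_section_def var_quotient_def smooth_on_const)

lemma vanishing_coeffs_const_series:
  assumes "h \<in> O[at 0](\<lambda>x. norm x ^ Suc k)"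
  shows "vanishing_coeffs k (const_series h)"
proof -
  have "const_series h mu \<in> O[at 0](\<lambda>x. norm x ^ (k - mi_size q mu + 1))" for mu
    using assms by (cases "mu = (\<lambda>_. 0)") (simp_all add: const_series_def mi_size_def)
  then show ?thesis by (simp add: vanishing_coeffs_def)
qed

lemma vanishing_coeffs_var_quotient:
  assumes "a < q" "vanishing_coeffs (Suc k) F"
  shows "vanishing_coeffs k (var_quotient a F)"
  unfolding vanishing_coeffs_def
proof (intro allI impI)
  fix nu assume nu: "admissible n q dg nu" "mi_size q nu \<le> k"
  show "var_quotient a F nu \<in> O[at 0](\<lambda>x. norm x ^ (k - mi_size q nu + 1))"
  proof (cases "(\<forall>b<a. nu b = 0) \<and> admissible n q dg (\<lambda>b. nu b + unit_mi a b)")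
    case True
    then show ?thesis
      using assms(2) nu mi_size_add_unit_mi[OF assms(1), of nu]
      by (auto simp: vanishing_coeffs_def var_quotient_def)
  qed (auto simp: var_quotient_def)
qed

lemma vanishing_coeffs_const_term_bigo:
  "vanishing_coeffs k F \<Longrightarrow> F (\<lambda>_. 0) \<in> O[at 0](\<lambda>x. norm x ^ Suc k)"
  unfolding vanishing_coeffs_def by (drule spec[of _ "\<lambda>_. 0"]) (simp add: admissible_zero mi_size_def)

end

context convex_open_nbhd_0
begin

lemma vanishing_coeffs_imp_max_ideal_pow_on:
  "is_section n q dg U F \<Longrightarrow> vanishing_coeffs n q dg k F \<Longrightarrow> max_ideal_pow_on n q dg U k F"
proof (induction k arbitrary: F)
  case 0
  have "in_coord_ideal_pow U 1 (F (\<lambda>_. 0))"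
    using 0(1) vanishing_coeffs_const_term_bigo[OF 0(2)]
    by (intro smooth_bigo_imp_in_coord_ideal_pow) (auto simp: is_section_def)
  then have "in_max_ideal F" using zero_in_U by (auto simp: in_max_ideal_def)
  then show ?case by (rule max_ideal_pow_on_0[OF 0(1)])
next
  case (Suc k)
  have "in_coord_ideal_pow U (Suc (Suc k)) (F (\<lambda>_. 0))"
    using Suc.prems(1) vanishing_coeffs_const_term_bigo[OF Suc.prems(2)]
    by (intro smooth_bigo_imp_in_coord_ideal_pow) (auto simp: is_section_def)
  then obtain h where h: "\<forall>i\<in>Basis. in_coord_ideal_pow U (Suc k) (h i)"
    and F0: "\<forall>x\<in>U. F (\<lambda>_. 0) x = (\<Sum>i\<in>Basis. (x \<bullet> i) * h i x)"
    unfolding in_coord_ideal_pow.simps(2)[of U "Suc k"] by blast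
  have coords: "max_ideal_pow_on n q dg U k (const_series (h i))" if "i \<in> Basis" for i
  proof (rule Suc.IH)
    have hi: "in_coord_ideal_pow U (Suc k) (h i)" using h that by blast
    show "is_section n q dg U (const_series (h i))"
      by (rule is_section_const_series[OF in_coord_ideal_pow_smooth[OF open_U hi]])
    show "vanishing_coeffs n q dg k (const_series (h i))"
      by (rule vanishing_coeffs_const_series[OF in_coord_ideal_pow_bigo[OF open_U zero_in_U hi]])
  qed
  have vars: "max_ideal_pow_on n q dg U k (var_quotient n q dg a F)" if "a < q" for a
    using Suc.prems that by (intro Suc.IH is_section_var_quotient vanishing_coeffs_var_quotient)
  obtain bl where bl: "set bl = (Basis :: 'a set)" "distinct bl"
    using finite_distinct_list[OF finite_Basis] by blast
  let ?ps = "map (\<lambda>i. (const_series (\<lambda>x. x \<bullet> i), const_series (h i))) bl @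
             map (\<lambda>a. (var_series a, var_quotient n q dg a F)) [0..<q]"
  show ?case
  proof (rule max_ideal_pow_on_Suc[where ps = ?ps])
    have "is_section n q dg U (const_series (\<lambda>x. x \<bullet> i))" for i :: 'a
      by (rule is_section_const_series[OF smooth_on_inner_left])
    moreover have "in_max_ideal (const_series (\<lambda>x. x \<bullet> i))" for i :: 'a
      by (simp add: in_max_ideal_def const_series_def)
    ultimately show "\<forall>(Y, G)\<in>set ?ps. is_section n q dg U Y \<and> in_max_ideal Y \<and> max_ideal_pow_on n q dg U k G"
      using bl coords vars is_section_var_series in_max_ideal_var_series by auto
    have "F mu x = (\<Sum>i\<leftarrow>bl. s_mult n q dg (const_series (\<lambda>x. x \<bullet> i)) (const_series (h i)) mu x) +
        (\<Sum>a\<leftarrow>[0..<q]. s_mult n q dg (var_series a) (var_quotient n q dg a F) mu x)" if "x \<in> U" for mu x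
      using series_decomposition[of n q dg F x h mu] Suc.prems(1) F0 that bl
      by (simp add: is_section_def sum_list_distinct_conv_sum_set atLeast0LessThan)
    then show "\<forall>mu. \<forall>x\<in>U. F mu x = (\<Sum>(Y, G)\<leftarrow>?ps. s_mult n q dg Y G mu x)"
      by (simp add: o_def)
  qed
qed

end

theorem lemma3:
  fixes n q :: nat and dg :: "nat \<Rightarrow> nat \<Rightarrow> bool"
    and U V :: "'a::euclidean_space set" and F :: "'a series" and k :: nat
  assumes deg_nonzero: "\<forall>a<q. \<exists>i<n. dg a i"
    and U: "open U" "convex U" "(0::'a) \<in> U"
    and V: "open V" "V \<subseteq> U" "0 \<in> V"
    and F: "is_section n q dg V F"
  shows "in_max_ideal_pow n q dg k F \<longleftrightarrow>
    (\<forall>mu. admissible n q dg mu \<longrightarrow> mi_size q mu \<le> k \<longrightarrow>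
       F mu \<in> O[at 0](\<lambda>x. norm x ^ (k - mi_size q mu + 1)))"
  unfolding vanishing_coeffs_def[symmetric]
proof
  assume "in_max_ideal_pow n q dg k F"
  then show "vanishing_coeffs n q dg k F"
    unfolding in_max_ideal_pow_iff using max_ideal_pow_on_imp_vanishing_coeffs by blast
next
  assume vanishing: "vanishing_coeffs n q dg k F"
  obtain r where r: "r > 0" "ball 0 r \<subseteq> V" using V open_contains_ball by blast
  interpret ball: convex_open_nbhd_0 "ball (0::'a) r" by unfold_locales (auto simp: r)
  have "is_section n q dg (ball 0 r) F"
    using F smooth_on_subset[OF r(2)] by (auto simp: is_section_def)
  then have "max_ideal_pow_on n q dg (ball 0 r) k F"
    using vanishing by (rule ball.vanishing_coeffs_imp_max_ideal_pow_on)
  then show "in_max_ideal_pow n q dg k F"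
    unfolding in_max_ideal_pow_iff using r(1) by (intro exI[of _ "ball 0 r"]) auto
qed

end
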